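(* Let $G$ be a connected graph with at least $5$ vertices and let $H$ be a connected component of the complement $\overline{G}$ such that $H$ is isomorphic to the path $P_4$ on $4$ vertices. Then no vertex of $H$ is a basis forced vertex of $G$.
   Context: All graphs are finite and simple. $\overline{G}$ denotes the complement graph. For vertices $u,v$ of a connected graph $G$, $d(u,v)$ is the length of a shortest $u$–$v$ path. A set $R\subseteq V(G)$ is a resolving set if for all distinct $x,y\in V(G)$ there is $r\in R$ with $d(r,x)\neq d(r,y)$. The metric dimension $\dim(G)$ is the minimum cardinality of a resolving set, and a resolving set of cardinality $\dim(G)$ is a metric basis. A vertex is a basis forced vertex if it belongs to every metric basis of $G$. *)

theory Defs
  imports Main
begin

definition simple_graph :: "'a set \<Rightarrow> ('a \<Rightarrow> 'a \<Rightarrow> bool) \<Rightarrow> bool" where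
  "simple_graph V E \<longleftrightarrow> finite V \<and> (\<forall>u v. E u v \<longrightarrow> u \<in> V \<and> v \<in> V)
     \<and> (\<forall>u v. E u v \<longrightarrow> E v u) \<and> (\<forall>v. \<not> E v v)"

definition edge_rel :: "('a \<Rightarrow> 'a \<Rightarrow> bool) \<Rightarrow> ('a \<times> 'a) set" where
  "edge_rel E = {(u, v). E u v}"

definition gconnected :: "'a set \<Rightarrow> ('a \<Rightarrow> 'a \<Rightarrow> bool) \<Rightarrow> bool" where
  "gconnected V E \<longleftrightarrow> V \<noteq> {} \<and> (\<forall>u\<in>V. \<forall>v\<in>V. (u, v) \<in> (edge_rel E)\<^sup>*)"

definition gdist :: "('a \<Rightarrow> 'a \<Rightarrow> bool) \<Rightarrow> 'a \<Rightarrow> 'a \<Rightarrow> nat" where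
  "gdist E u v = (LEAST n. (u, v) \<in> (edge_rel E) ^^ n)"

definition resolving_set :: "'a set \<Rightarrow> ('a \<Rightarrow> 'a \<Rightarrow> bool) \<Rightarrow> 'a set \<Rightarrow> bool" where
  "resolving_set V E R \<longleftrightarrow> R \<subseteq> V \<and>
     (\<forall>x\<in>V. \<forall>y\<in>V. x \<noteq> y \<longrightarrow> (\<exists>r\<in>R. gdist E r x \<noteq> gdist E r y))"

definition metric_dim :: "'a set \<Rightarrow> ('a \<Rightarrow> 'a \<Rightarrow> bool) \<Rightarrow> nat" where
  "metric_dim V E = (LEAST k. \<exists>R. resolving_set V E R \<and> card R = k)"

definition metric_basis :: "'a set \<Rightarrow> ('a \<Rightarrow> 'a \<Rightarrow> bool) \<Rightarrow> 'a set \<Rightarrow> bool" where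
  "metric_basis V E R \<longleftrightarrow> resolving_set V E R \<and> card R = metric_dim V E"

definition basis_forced :: "'a set \<Rightarrow> ('a \<Rightarrow> 'a \<Rightarrow> bool) \<Rightarrow> 'a \<Rightarrow> bool" where
  "basis_forced V E v \<longleftrightarrow> v \<in> V \<and> (\<forall>R. metric_basis V E R \<longrightarrow> v \<in> R)"

definition compl_graph :: "'a set \<Rightarrow> ('a \<Rightarrow> 'a \<Rightarrow> bool) \<Rightarrow> 'a \<Rightarrow> 'a \<Rightarrow> bool" where
  "compl_graph V E u v \<longleftrightarrow> u \<in> V \<and> v \<in> V \<and> u \<noteq> v \<and> \<not> E u v"

text \<open>Vertex set of a connected component: an equivalence class of reachability.
  The component itself is the subgraph induced on it.\<close>

definition component_of :: "'a set \<Rightarrow> ('a \<Rightarrow> 'a \<Rightarrow> bool) \<Rightarrow> 'a set \<Rightarrow> bool" where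
  "component_of V E C \<longleftrightarrow> (\<exists>v\<in>V. C = {u \<in> V. (v, u) \<in> (edge_rel E)\<^sup>*})"

definition P4_edge :: "nat \<Rightarrow> nat \<Rightarrow> bool" where
  "P4_edge i j \<longleftrightarrow> i < 4 \<and> j < 4 \<and> (i = j + 1 \<or> j = i + 1)"

definition induced_iso_P4 :: "('a \<Rightarrow> 'a \<Rightarrow> bool) \<Rightarrow> 'a set \<Rightarrow> bool" where
  "induced_iso_P4 E C \<longleftrightarrow> (\<exists>f. bij_betw f {0..<4::nat} C \<and>
     (\<forall>i<4. \<forall>j<4. E (f i) (f j) \<longleftrightarrow> P4_edge i j))"

end

theory Submission
  imports Defs
begin

text \<open>Write C = {a, b, c, d} with a-b-c-d the path in the complement. Every vertex of C is
  adjacent in G to every vertex of V - C, which is nonempty, so distances inside C are 1 or 2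
  and vertices outside C see all of C at distance 1. A metric basis R containing v \<in> C must
  therefore contain a second vertex of C, because v alone does not resolve C. Replacing
  R \<inter> C by {b, c} (if v is a or d) or by {a, d} (if v is b or c) keeps R resolving
  without making it larger, giving a metric basis that avoids v.\<close>

lemma gdist_self: "gdist E u u = 0"
  unfolding gdist_def by (rule Least_eq_0) simp

lemma gdist_eq_1:
  assumes "E u v" "u \<noteq> v"
  shows "gdist E u v = 1"
  unfolding gdist_def
proof (rule Least_equality)
  show "(u, v) \<in> edge_rel E ^^ 1" using assms by (simp add: edge_rel_def)
next
  fix m assume "(u, v) \<in> edge_rel E ^^ m"
  then show "1 \<le> m" using assms by (cases m) auto
qed

lemma gdist_eq_2:
  assumes "\<not> E u v" "u \<noteq> v" "E u w" "E w v"
  shows "gdist E u v = 2"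
  unfolding gdist_def
proof (rule Least_equality)
  show "(u, v) \<in> edge_rel E ^^ 2" using assms
    by (auto simp add: edge_rel_def numeral_2_eq_2 relcomp_unfold)
next
  fix m assume m: "(u, v) \<in> edge_rel E ^^ m"
  show "2 \<le> m"
  proof (rule ccontr)
    assume "\<not> 2 \<le> m"
    then have "m = 0 \<or> m = 1" by auto
    then show False using m assms by (auto simp: edge_rel_def)
  qed
qed

lemma gdist_eq_0_iff:
  assumes "(u, v) \<in> (edge_rel E)\<^sup>*"
  shows "gdist E u v = 0 \<longleftrightarrow> u = v"
proof
  obtain n where "(u, v) \<in> edge_rel E ^^ n" using assms rtrancl_power by blast
  then have "(u, v) \<in> edge_rel E ^^ gdist E u v" unfolding gdist_def by (rule LeastI)
  then show "gdist E u v = 0 \<Longrightarrow> u = v" by simp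
qed (simp add: gdist_self)

definition resolves :: "('a \<Rightarrow> 'a \<Rightarrow> bool) \<Rightarrow> 'a set \<Rightarrow> 'a set \<Rightarrow> bool" where
  "resolves E S C \<longleftrightarrow> (\<forall>x\<in>C. \<forall>y\<in>C. x \<noteq> y \<longrightarrow> (\<exists>s\<in>S. gdist E s x \<noteq> gdist E s y))"

lemma resolves_mono: "resolves E S C \<Longrightarrow> S \<subseteq> S' \<Longrightarrow> resolves E S' C"
  unfolding resolves_def by blast

lemma metric_basis_exists:
  assumes "gconnected V E"
  shows "\<exists>R. metric_basis V E R"
proof -
  have "resolving_set V E V"
    unfolding resolving_set_def
  proof (intro conjI ballI impI order_refl)
    fix x y assume "x \<in> V" "y \<in> V" "x \<noteq> y"
    moreover have "(x, y) \<in> (edge_rel E)\<^sup>*" using assms \<open>x \<in> V\<close> \<open>y \<in> V\<close>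
      by (simp add: gconnected_def)
    ultimately have "gdist E x x \<noteq> gdist E x y" by (simp add: gdist_self gdist_eq_0_iff)
    with \<open>x \<in> V\<close> show "\<exists>r\<in>V. gdist E r x \<noteq> gdist E r y" by blast
  qed
  then have "\<exists>k R. resolving_set V E R \<and> card R = k" by blast
  then have "\<exists>R. resolving_set V E R \<and> card R = metric_dim V E"
    unfolding metric_dim_def by (rule LeastI_ex)
  then show ?thesis by (auto simp: metric_basis_def)
qed

lemma metric_basis_if_resolving_card_le:
  assumes "metric_basis V E R" "resolving_set V E R'" "card R' \<le> card R"
  shows "metric_basis V E R'"
proof -
  have "metric_dim V E \<le> card R'"
    unfolding metric_dim_def by (rule Least_le) (use assms(2) in blast)
  then show ?thesis using assms by (simp add: metric_basis_def)
qed

lemma gdist_joined: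
  assumes "simple_graph V E" "\<forall>x\<in>C. \<forall>y\<in>V - C. E x y" "x \<in> C" "y \<in> V - C"
  shows "gdist E x y = 1" "gdist E y x = 1"
proof -
  have "E x y" "x \<noteq> y" using assms(2-4) by auto
  moreover from \<open>E x y\<close> have "E y x" using assms(1) by (simp add: simple_graph_def)
  ultimately show "gdist E x y = 1" "gdist E y x = 1" by (simp_all add: gdist_eq_1)
qed

lemma resolves_Int_joined:
  assumes "simple_graph V E" "\<forall>x\<in>C. \<forall>y\<in>V - C. E x y" "C \<subseteq> V" "resolving_set V E R"
  shows "resolves E (R \<inter> C) C"
  unfolding resolves_def
proof (intro ballI impI)
  fix x y assume "x \<in> C" "y \<in> C" "x \<noteq> y"
  moreover have "x \<in> V" "y \<in> V" using assms(3) \<open>x \<in> C\<close> \<open>y \<in> C\<close> by auto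
  ultimately obtain r where r: "r \<in> R" "gdist E r x \<noteq> gdist E r y"
    using assms(4) unfolding resolving_set_def by blast
  moreover have "r \<in> C"
  proof (rule ccontr)
    assume "r \<notin> C"
    then have "r \<in> V - C" using r assms(4) by (auto simp: resolving_set_def)
    then have "gdist E r x = 1" "gdist E r y = 1"
      using gdist_joined(2)[OF assms(1,2)] \<open>x \<in> C\<close> \<open>y \<in> C\<close> by blast+
    then show False using r(2) by simp
  qed
  ultimately show "\<exists>r\<in>R \<inter> C. gdist E r x \<noteq> gdist E r y" by blast
qed

text \<open>Vertices of C see all of V - C at distance 1, so the last hypothesis lets S separate
  C from V - C, and pairs outside C are still resolved by R - C.\<close>

lemma resolving_set_exchange:
  assumes "simple_graph V E" "\<forall>x\<in>C. \<forall>y\<in>V - C. E x y" "C \<subseteq> V" "resolving_set V E R"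
    and "S \<subseteq> C" "resolves E S C" "\<forall>x\<in>C. \<exists>s\<in>S. gdist E s x \<noteq> 1"
  shows "resolving_set V E (S \<union> (R - C))"
  unfolding resolving_set_def
proof (intro conjI ballI impI)
  show "S \<union> (R - C) \<subseteq> V" using assms(3-5) by (auto simp: resolving_set_def)
next
  fix x y assume xy: "x \<in> V" "y \<in> V" "x \<noteq> y"
  have separate: "\<exists>s\<in>S. gdist E s x \<noteq> gdist E s y" if "x \<in> C" "y \<in> V - C" for x y
  proof -
    obtain s where "s \<in> S" "gdist E s x \<noteq> 1" using assms(7) \<open>x \<in> C\<close> by blast
    moreover have "gdist E s y = 1" using gdist_joined(1)[OF assms(1,2)] assms(5) that \<open>s \<in> S\<close> by blast
    ultimately show ?thesis by (metis)
  qed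
  consider "x \<in> C" "y \<in> C" | "x \<in> C" "y \<notin> C" | "x \<notin> C" "y \<in> C" | "x \<notin> C" "y \<notin> C"
    by blast
  then show "\<exists>r\<in>S \<union> (R - C). gdist E r x \<noteq> gdist E r y"
  proof cases
    case 1
    then obtain s where "s \<in> S" "gdist E s x \<noteq> gdist E s y"
      using assms(6) xy unfolding resolves_def by blast
    then show ?thesis by blast
  next
    case 2
    then show ?thesis using separate xy by blast
  next
    case 3
    then obtain s where "s \<in> S" "gdist E s y \<noteq> gdist E s x" using separate[of y x] xy by blast
    then show ?thesis by (metis UnI1)
  next
    case 4
    obtain r where r: "r \<in> R" "gdist E r x \<noteq> gdist E r y"
      using assms(4) xy unfolding resolving_set_def by blast
    have "r \<notin> C"
    proof
      assume "r \<in> C"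
      then have "gdist E r x = 1" "gdist E r y = 1"
        using gdist_joined(1)[OF assms(1,2)] 4 xy by blast+
      then show False using r(2) by simp
    qed
    then show ?thesis using r by blast
  qed
qed

lemma not_basis_forced_by_exchange:
  assumes "simple_graph V E" "gconnected V E" "\<forall>x\<in>C. \<forall>y\<in>V - C. E x y" "C \<subseteq> V"
    and "v \<in> C" "\<not> resolves E {v} C"
    and "S \<subseteq> C - {v}" "card S \<le> 2" "resolves E S C" "\<forall>x\<in>C. \<exists>s\<in>S. gdist E s x \<noteq> 1"
  shows "\<not> basis_forced V E v"
proof
  assume forced: "basis_forced V E v"
  obtain R where R: "metric_basis V E R" using metric_basis_exists[OF assms(2)] by blast
  then have res: "resolving_set V E R" and "v \<in> R"
    using forced by (auto simp: metric_basis_def basis_forced_def)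
  have "finite R" using res assms(1) finite_subset by (auto simp: resolving_set_def simple_graph_def)
  have "\<not> R \<inter> C \<subseteq> {v}"
    using resolves_Int_joined[OF assms(1,3,4) res] assms(6) resolves_mono by blast
  with \<open>v \<in> R\<close> assms(5) obtain u where "u \<in> R \<inter> C" "u \<noteq> v" by blast
  then have "2 \<le> card (R \<inter> C)"
    using \<open>v \<in> R\<close> assms(5) \<open>finite R\<close> card_mono[of "R \<inter> C" "{u, v}"] by auto
  then have "card (S \<union> (R - C)) \<le> card R"
    using card_Un_le[of S "R - C"] card_Int_Diff[OF \<open>finite R\<close>, of C] assms(8) by linarith
  then have "metric_basis V E (S \<union> (R - C))"
    using metric_basis_if_resolving_card_le R resolving_set_exchange[OF assms(1,3,4) res] assms(7,9,10)
    by blast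
  moreover have "v \<notin> S \<union> (R - C)" using assms(5,7) by blast
  ultimately show False using forced by (auto simp: basis_forced_def)
qed

lemma component_of_subset: "component_of V E C \<Longrightarrow> C \<subseteq> V"
  unfolding component_of_def by blast

lemma component_of_compl_joined:
  assumes "component_of V (compl_graph V E) C" "x \<in> C" "y \<in> V - C"
  shows "E x y"
proof (rule ccontr)
  obtain r where C: "C = {u \<in> V. (r, u) \<in> (edge_rel (compl_graph V E))\<^sup>*}"
    using assms(1) unfolding component_of_def by blast
  assume "\<not> E x y"
  then have "(x, y) \<in> edge_rel (compl_graph V E)"
    using assms(2,3) C by (auto simp: compl_graph_def edge_rel_def)
  moreover have "(r, x) \<in> (edge_rel (compl_graph V E))\<^sup>*" using assms(2) C by blast
  ultimately have "(r, y) \<in> (edge_rel (compl_graph V E))\<^sup>*" by simp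
  then show False using assms(3) C by blast
qed

lemma gdist_within_joined:
  assumes "simple_graph V E" "\<forall>x\<in>C. \<forall>y\<in>V - C. E x y" "w \<in> V - C"
    and "x \<in> C" "y \<in> C" "x \<noteq> y"
  shows "gdist E x y = (if E x y then 1 else 2)"
proof -
  have "E x w" "E y w" using assms(2-5) by blast+
  then have "E w y" using assms(1) unfolding simple_graph_def by blast
  then show ?thesis using \<open>E x w\<close> assms(6) by (simp add: gdist_eq_1 gdist_eq_2)
qed

lemma induced_iso_P4_complE:
  assumes "C \<subseteq> V" "induced_iso_P4 (compl_graph V E) C"
  obtains a b c d where "C = {a, b, c, d}" "distinct [a, b, c, d]"
    "E a c" "E a d" "E b d" "\<not> E a b" "\<not> E b c" "\<not> E c d"
proof -
  obtain f where bij: "bij_betw f {0..<4::nat} C"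
    and P4: "\<forall>i<4. \<forall>j<4. compl_graph V E (f i) (f j) \<longleftrightarrow> P4_edge i j"
    using assms(2) unfolding induced_iso_P4_def by blast
  have four: "{0..<4::nat} = {0, 1, 2, 3}" by auto
  have inj: "inj_on f {0..<4}" using bij by (simp add: bij_betw_def)
  have E_iff: "E (f i) (f j) \<longleftrightarrow> \<not> P4_edge i j" if "i < 4" "j < 4" "i \<noteq> j" for i j
  proof -
    have "f i \<in> C" "f j \<in> C" using that bij_betw_apply[OF bij] by simp_all
    moreover have "f i \<noteq> f j" using that inj_on_eq_iff[OF inj] by simp
    ultimately show ?thesis using P4 that assms(1) unfolding compl_graph_def by blast
  qed
  show ?thesis
  proof (rule that[of "f 0" "f 1" "f 2" "f 3"])
    show "C = {f 0, f 1, f 2, f 3}" using bij four by (auto simp: bij_betw_def)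
    show "distinct [f 0, f 1, f 2, f 3]" using inj_on_eq_iff[OF inj] by simp
  qed (simp_all add: E_iff P4_edge_def)
qed

lemma compl_P4_not_basis_forced:
  assumes "simple_graph V E" "gconnected V E" "\<forall>x\<in>C. \<forall>y\<in>V - C. E x y" "C \<subseteq> V"
    and "w \<in> V - C" "C = {a, b, c, d}" "distinct [a, b, c, d]"
    and "E a c" "E a d" "E b d" "\<not> E a b" "\<not> E b c" "\<not> E c d"
  shows "\<not> basis_forced V E a" "\<not> basis_forced V E b"
proof -
  have sym: "E x y \<longleftrightarrow> E y x" for x y using assms(1) unfolding simple_graph_def by blast
  have dist: "gdist E x y = (if x = y then 0 else if E x y then 1 else 2)"
    if "x \<in> {a, b, c, d}" "y \<in> {a, b, c, d}" for x y
    using gdist_within_joined[OF assms(1,3,5)] that assms(6)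
    by (cases "x = y") (simp_all add: gdist_self)
  note exchange = not_basis_forced_by_exchange[OF assms(1-4)]
  \<comment> \<open>a is unable to tell c from d, and b is unable to tell a from c\<close>
  show "\<not> basis_forced V E a"
    by (rule exchange[where S = "{b, c}"])
      (use assms(6-13) in \<open>auto simp: resolves_def dist sym\<close>)
  show "\<not> basis_forced V E b"
    by (rule exchange[where S = "{a, d}"])
      (use assms(6-13) in \<open>auto simp: resolves_def dist sym\<close>)
qed

theorem lemma7:
  fixes V :: "'a set" and E :: "'a \<Rightarrow> 'a \<Rightarrow> bool" and C :: "'a set"
  assumes "simple_graph V E"
    and "gconnected V E"
    and "card V \<ge> 5"
    and "component_of V (compl_graph V E) C"
    and "induced_iso_P4 (compl_graph V E) C"
  shows "\<forall>v\<in>C. \<not> basis_forced V E v"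
proof -
  have CV: "C \<subseteq> V" using assms(4) by (rule component_of_subset)
  have joined: "\<forall>x\<in>C. \<forall>y\<in>V - C. E x y" using component_of_compl_joined[OF assms(4)] by blast
  obtain a b c d where C: "C = {a, b, c, d}" and abcd: "distinct [a, b, c, d]"
    and edges: "E a c" "E a d" "E b d" "\<not> E a b" "\<not> E b c" "\<not> E c d"
    using induced_iso_P4_complE[OF CV assms(5)] by blast
  have "\<not> V \<subseteq> C"
    using assms(3) card_mono[of C V] C abcd by (auto simp: card_insert_if)
  then obtain w where w: "w \<in> V - C" by blast
  have sym: "E x y \<longleftrightarrow> E y x" for x y using assms(1) unfolding simple_graph_def by blast
  note P4 = compl_P4_not_basis_forced[OF assms(1,2) joined CV w]
  have "\<not> basis_forced V E a" "\<not> basis_forced V E b" using P4[OF C abcd edges] by simp_all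
  moreover have "\<not> basis_forced V E d" "\<not> basis_forced V E c"
  proof -
    have "C = {d, c, b, a}" "distinct [d, c, b, a]" using C abcd by auto
    moreover have "E d b" "E d a" "E c a" "\<not> E d c" "\<not> E c b" "\<not> E b a" using edges sym by auto
    ultimately show "\<not> basis_forced V E d" "\<not> basis_forced V E c" using P4 by simp_all
  qed
  ultimately show ?thesis using C by blast
qed

end
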